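(* Let $m\ge 1$, let $\lambda_1\ge 0$ and $\lambda_2\ge 0$, and let $f_1\ge f_2\ge\cdots\ge f_m$ be real numbers. Then there exist real numbers $\tau_{i0}\in[-\lambda_1,\lambda_1]$ for $i=1,\dots,m$ and real numbers $\tau_{ij}\in[-\lambda_2,\lambda_2]$ for $i\neq j\in\{1,\dots,m\}$, satisfying $\tau_{ij}=-\tau_{ji}$ for all $i\ne j$, such that $$f_i+\tau_{i0}+\sum_{j\in\{1,\dots,m\}\setminus\{i\}}\tau_{ij}=0,\qquad i=1,\dots,m,$$ if and only if $$\sum_{j=1}^{k}f_j\le \lambda_1 k+\lambda_2 k(m-k)\quad\text{for } k=1,\dots,m,$$ and $$\sum_{j=k+1}^{m}f_j\ge -\lambda_1(m-k)-\lambda_2 k(m-k)\quad\text{for } k=0,\dots,m-1.$$ *)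

theory Defs
  imports Complex_Main
begin

end

theory Submission
  imports Defs
begin

text \<open>Summing the balance equations over a set \<open>X\<close> of \<open>k\<close> indices cancels the flows
  \<open>\<tau>\<^sub>i\<^sub>j\<close> inside \<open>X\<close> by antisymmetry, which leaves
  \<open>\<bar>\<Sum>\<^sub>X f\<bar> \<le> \<lambda>\<^sub>1 k + \<lambda>\<^sub>2 k (m - k)\<close>; this gives necessity.
  Sufficiency is proved by induction on \<open>m\<close>. Clamp each \<open>f\<^sub>i\<close> into
  \<open>[f\<^sub>i - \<lambda>\<^sub>1, f\<^sub>i + \<lambda>\<^sub>1]\<close> towards a common level \<open>\<theta>\<close>, chosen by the intermediate
  value theorem so that the clamped values \<open>g\<^sub>i\<close> sum to zero, and put \<open>\<tau>\<^sub>i\<^sub>0 = g\<^sub>i - f\<^sub>i\<close>.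
  Since \<open>k \<mapsto> \<lambda>\<^sub>2 k (m - k)\<close> is concave and the prefix sums of \<open>g\<close> are linear where
  \<open>g = \<theta>\<close>, these prefix sums stay below \<open>\<lambda>\<^sub>2 k (m - k)\<close>. Hence \<open>g\<^sub>1, \<dots>, g\<^sub>m\<^sub>-\<^sub>1\<close>
  satisfy the hypotheses with both capacities equal to \<open>\<lambda>\<^sub>2\<close>, and the source flows of a
  solution of that smaller instance serve as the flows to the last index \<open>m\<close>.\<close>

definition flow_feasible :: "nat \<Rightarrow> real \<Rightarrow> real \<Rightarrow> (nat \<Rightarrow> real) \<Rightarrow> bool" where
  "flow_feasible m l1 l2 f \<longleftrightarrow> (\<exists>t0 :: nat \<Rightarrow> real. \<exists>t :: nat \<Rightarrow> nat \<Rightarrow> real.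
     (\<forall>i\<in>{1..m}. t0 i \<in> {-l1..l1}) \<and>
     (\<forall>i\<in>{1..m}. \<forall>j\<in>{1..m}. i \<noteq> j \<longrightarrow> t i j \<in> {-l2..l2} \<and> t i j = - t j i) \<and>
     (\<forall>i\<in>{1..m}. f i + t0 i + (\<Sum>j\<in>{1..m} - {i}. t i j) = 0))"

definition prefix_sums_bounded :: "nat \<Rightarrow> real \<Rightarrow> real \<Rightarrow> (nat \<Rightarrow> real) \<Rightarrow> bool" where
  "prefix_sums_bounded m l1 l2 f \<longleftrightarrow>
     (\<forall>k\<in>{1..m}. (\<Sum>j=1..k. f j) \<le> l1 * real k + l2 * real k * real (m - k))"

definition suffix_sums_bounded :: "nat \<Rightarrow> real \<Rightarrow> real \<Rightarrow> (nat \<Rightarrow> real) \<Rightarrow> bool" where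
  "suffix_sums_bounded m l1 l2 f \<longleftrightarrow>
     (\<forall>k<m. (\<Sum>j=k+1..m. f j) \<ge> - l1 * real (m - k) - l2 * real k * real (m - k))"

lemma sum_offdiag_antisym_eq_0:
  fixes t :: "'a \<Rightarrow> 'a \<Rightarrow> 'b :: linordered_ab_group_add"
  assumes "finite A" and "\<And>i j. i \<in> A \<Longrightarrow> j \<in> A \<Longrightarrow> i \<noteq> j \<Longrightarrow> t i j = - t j i"
  shows "(\<Sum>i\<in>A. \<Sum>j\<in>A - {i}. t i j) = 0"
proof -
  let ?S = "Sigma A (\<lambda>i. A - {i})"
  have "(\<Sum>p\<in>?S. t (fst p) (snd p)) = (\<Sum>p\<in>prod.swap ` ?S. t (snd p) (fst p))"
    by (subst sum.reindex) auto
  also have "prod.swap ` ?S = ?S" by auto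
  also have "(\<Sum>p\<in>?S. t (snd p) (fst p)) = (\<Sum>p\<in>?S. - t (fst p) (snd p))"
    by (intro sum.cong refl) (auto intro: assms(2))
  finally have "(\<Sum>p\<in>?S. t (fst p) (snd p)) = 0" by (simp add: sum_negf equal_neg_zero)
  then show ?thesis
    using assms(1) by (simp add: sum.Sigma case_prod_beta)
qed

lemma flow_feasible_subset_sum_bound:
  assumes "flow_feasible m l1 l2 f" and X: "X \<subseteq> {1..m}"
  shows "\<bar>\<Sum>i\<in>X. f i\<bar> \<le> real (card X) * l1 + real (card X) * real (card ({1..m} - X)) * l2"
proof -
  obtain t0 t where t0: "\<forall>i\<in>{1..m}. t0 i \<in> {-l1..l1}"
    and t: "\<forall>i\<in>{1..m}. \<forall>j\<in>{1..m}. i \<noteq> j \<longrightarrow> t i j \<in> {-l2..l2} \<and> t i j = - t j i"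
    and balance: "\<forall>i\<in>{1..m}. f i + t0 i + (\<Sum>j\<in>{1..m} - {i}. t i j) = 0"
    using assms(1) unfolding flow_feasible_def by blast
  define Y where "Y = {1..m} - X"
  have finX: "finite X" using X finite_subset by blast
  have split: "{1..m} - {i} = (X - {i}) \<union> Y" "(X - {i}) \<inter> Y = {}" if "i \<in> X" for i
    using X that unfolding Y_def by auto
  have "0 = (\<Sum>i\<in>X. f i + t0 i + (\<Sum>j\<in>{1..m} - {i}. t i j))"
    using balance X by (intro sum.neutral[symmetric]) auto
  also have "\<dots> = (\<Sum>i\<in>X. f i + t0 i + (\<Sum>j\<in>X - {i}. t i j) + (\<Sum>j\<in>Y. t i j))"
    using split finX by (intro sum.cong) (auto simp: Y_def sum.union_disjoint)
  also have "\<dots> = (\<Sum>i\<in>X. f i) + (\<Sum>i\<in>X. t0 i) + (\<Sum>i\<in>X. \<Sum>j\<in>X - {i}. t i j) + (\<Sum>i\<in>X. \<Sum>j\<in>Y. t i j)"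
    by (simp add: sum.distrib)
  also have "(\<Sum>i\<in>X. \<Sum>j\<in>X - {i}. t i j) = 0"
    using X t by (intro sum_offdiag_antisym_eq_0 finX) blast
  finally have "\<bar>\<Sum>i\<in>X. f i\<bar> = \<bar>(\<Sum>i\<in>X. t0 i) + (\<Sum>i\<in>X. \<Sum>j\<in>Y. t i j)\<bar>"
    by (simp add: abs_minus_commute algebra_simps)
  also have "\<dots> \<le> (\<Sum>i\<in>X. \<bar>t0 i\<bar>) + (\<Sum>i\<in>X. \<Sum>j\<in>Y. \<bar>t i j\<bar>)"
    by (intro abs_triangle_ineq[THEN order_trans] add_mono sum_abs[THEN order_trans] sum_mono) auto
  also have "\<dots> \<le> (\<Sum>i\<in>X. l1) + (\<Sum>i\<in>X. \<Sum>j\<in>Y. l2)"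
    using X t0 t by (intro add_mono sum_mono) (force simp: Y_def abs_le_iff)+
  finally show ?thesis by (simp add: Y_def)
qed

lemma flow_feasible_imp_sums_bounded:
  assumes "flow_feasible m l1 l2 f"
  shows "prefix_sums_bounded m l1 l2 f" and "suffix_sums_bounded m l1 l2 f"
proof -
  have "(\<Sum>j=1..k. f j) \<le> l1 * real k + l2 * real k * real (m - k)" if "k \<le> m" for k
  proof -
    have "{1..m} - {1..k} = {k+1..m}" by auto
    then have "\<bar>\<Sum>j=1..k. f j\<bar> \<le> l1 * real k + l2 * real k * real (m - k)"
      using flow_feasible_subset_sum_bound[OF assms, of "{1..k}"] that by (simp add: algebra_simps)
    then show ?thesis by (simp only: abs_le_iff)
  qed
  then show "prefix_sums_bounded m l1 l2 f"
    unfolding prefix_sums_bounded_def by simp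
  have "- l1 * real (m - k) - l2 * real k * real (m - k) \<le> (\<Sum>j=k+1..m. f j)" if "k \<le> m" for k
  proof -
    have "{1..m} - {k+1..m} = {1..k}" using that by auto
    then have "\<bar>\<Sum>j=k+1..m. f j\<bar> \<le> l1 * real (m - k) + l2 * real k * real (m - k)"
      using flow_feasible_subset_sum_bound[OF assms, of "{k+1..m}"] that by (simp add: algebra_simps)
    then show ?thesis by (simp only: abs_le_iff) linarith
  qed
  then show "suffix_sums_bounded m l1 l2 f"
    unfolding suffix_sums_bounded_def by simp
qed

lemma sum_atLeast1_split:
  fixes f :: "nat \<Rightarrow> 'a :: comm_monoid_add"
  assumes "k \<le> m"
  shows "(\<Sum>i=1..m. f i) = (\<Sum>i=1..k. f i) + (\<Sum>i=k+1..m. f i)"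
  using sum.ub_add_nat[of 1 k f "m - k"] assms by simp

lemma downclosed_initial_segment:
  fixes P :: "nat \<Rightarrow> bool"
  assumes "\<And>i j. 1 \<le> i \<Longrightarrow> i \<le> j \<Longrightarrow> j \<le> n \<Longrightarrow> P j \<Longrightarrow> P i"
  obtains p where "p \<le> n" and "\<And>i. 1 \<le> i \<Longrightarrow> i \<le> n \<Longrightarrow> P i \<longleftrightarrow> i \<le> p"
proof -
  define p where "p = Max (insert 0 {i\<in>{1..n}. P i})"
  have "p \<in> insert 0 {i\<in>{1..n}. P i}"
    unfolding p_def by (intro Max_in) auto
  then have "p \<le> n" and Pp: "1 \<le> p \<Longrightarrow> P p" by auto
  moreover have "P i \<longleftrightarrow> i \<le> p" if "1 \<le> i" "i \<le> n" for i
  proof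
    assume "P i"
    then show "i \<le> p" unfolding p_def using that by (intro Max_ge) auto
  next
    assume "i \<le> p"
    then show "P i" using assms[of i p] Pp that \<open>p \<le> n\<close> by simp
  qed
  ultimately show ?thesis using that by blast
qed

definition clamp :: "real \<Rightarrow> real \<Rightarrow> real \<Rightarrow> real" where
  "clamp l \<theta> x = max (x - l) (min \<theta> (x + l))"

lemma clamp_dist: "0 \<le> l \<Longrightarrow> \<bar>clamp l \<theta> x - x\<bar> \<le> l"
  by (auto simp: clamp_def abs_le_iff)

lemma clamp_mono: "x \<le> y \<Longrightarrow> clamp l \<theta> x \<le> clamp l \<theta> y"
  unfolding clamp_def by (intro max.mono min.mono) auto

lemma clamp_eq_lower: "\<theta> \<le> x - l \<Longrightarrow> clamp l \<theta> x = x - l"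
  by (simp add: clamp_def)

lemma clamp_eq_upper: "0 \<le> l \<Longrightarrow> x + l \<le> \<theta> \<Longrightarrow> clamp l \<theta> x = x + l"
  by (simp add: clamp_def)

lemma clamp_eq_threshold: "x - l \<le> \<theta> \<Longrightarrow> \<theta> \<le> x + l \<Longrightarrow> clamp l \<theta> x = \<theta>"
  by (simp add: clamp_def)

lemma continuous_on_clamp_sum: "continuous_on S (\<lambda>\<theta>. \<Sum>i\<in>A. clamp l \<theta> (f i))"
  unfolding clamp_def by (intro continuous_intros)

lemma exists_clamp_threshold:
  fixes f :: "'a \<Rightarrow> real"
  assumes "finite A" and "A \<noteq> {}" and "0 \<le> l" and "\<bar>\<Sum>i\<in>A. f i\<bar> \<le> real (card A) * l"
  obtains \<theta> where "(\<Sum>i\<in>A. clamp l \<theta> (f i)) = 0"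
proof -
  define lo where "lo = Min (f ` A) - l"
  define hi where "hi = Max (f ` A) + l"
  have "(\<Sum>i\<in>A. clamp l lo (f i)) = (\<Sum>i\<in>A. f i - l)"
    using assms(1) by (intro sum.cong refl clamp_eq_lower) (simp add: lo_def)
  then have lo_le: "(\<Sum>i\<in>A. clamp l lo (f i)) \<le> 0"
    using assms(4) by (simp add: sum_subtractf abs_le_iff)
  have "(\<Sum>i\<in>A. clamp l hi (f i)) = (\<Sum>i\<in>A. f i + l)"
    using assms(1,3) by (intro sum.cong refl clamp_eq_upper) (simp_all add: hi_def)
  then have hi_ge: "0 \<le> (\<Sum>i\<in>A. clamp l hi (f i))"
    using assms(4) by (simp add: sum.distrib abs_le_iff)
  obtain a where "a \<in> A" using assms(2) by blast
  then have "Min (f ` A) \<le> f a" and "f a \<le> Max (f ` A)"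
    using assms(1) by simp_all
  then have "lo \<le> hi"
    using assms(3) by (simp add: lo_def hi_def)
  then show ?thesis
    using IVT'[OF lo_le hi_ge _ continuous_on_clamp_sum] that by blast
qed

lemma concave_bound_interpolate:
  fixes P K Q M l GP GK GQ \<theta> :: real
  assumes "P < K" "K < Q" "0 \<le> l"
    and "GP \<le> l * P * (M - P)" "GQ \<le> l * Q * (M - Q)"
    and "GK = GP + (K - P) * \<theta>" "GQ = GK + (Q - K) * \<theta>"
  shows "GK \<le> l * K * (M - K)"
proof -
  have "(Q - P) * GK = (Q - K) * GP + (K - P) * GQ"
    by (simp add: assms(6,7) algebra_simps)
  also have "\<dots> \<le> (Q - K) * (l * P * (M - P)) + (K - P) * (l * Q * (M - Q))"
    using assms by (intro add_mono mult_left_mono) auto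
  also have "\<dots> = (Q - P) * (l * K * (M - K)) - l * ((K - P) * (Q - K) * (Q - P))"
    by (simp add: algebra_simps)
  also have "\<dots> \<le> (Q - P) * (l * K * (M - K))"
    using assms by simp
  finally show ?thesis using assms(1,2) by simp
qed

lemma clamp_prefix_sum_bound_of_lower:
  fixes f :: "nat \<Rightarrow> real"
  assumes "prefix_sums_bounded m l1 l2 f" and "k \<le> m" and "\<forall>i\<in>{1..k}. \<theta> \<le> f i - l1"
  shows "(\<Sum>i=1..k. clamp l1 \<theta> (f i)) \<le> l2 * real k * (real m - real k)"
proof (cases "k = 0")
  case False
  have "(\<Sum>i=1..k. clamp l1 \<theta> (f i)) = (\<Sum>i=1..k. f i - l1)"
    using assms(3) by (intro sum.cong) (auto simp: clamp_eq_lower)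
  moreover have "(\<Sum>i=1..k. f i) \<le> l1 * real k + l2 * real k * real (m - k)"
    using assms(1,2) False unfolding prefix_sums_bounded_def by simp
  ultimately show ?thesis
    using assms(2) by (simp add: sum_subtractf of_nat_diff algebra_simps)
qed simp

lemma clamp_prefix_sum_bound_of_upper:
  fixes f :: "nat \<Rightarrow> real"
  assumes "suffix_sums_bounded m l1 l2 f" and zero: "(\<Sum>i=1..m. clamp l1 \<theta> (f i)) = 0"
    and "0 \<le> l1" and "k \<le> m" and "\<forall>i\<in>{k+1..m}. f i + l1 \<le> \<theta>"
  shows "(\<Sum>i=1..k. clamp l1 \<theta> (f i)) \<le> l2 * real k * (real m - real k)"
proof (cases "k = m")
  case False
  have "(\<Sum>i=1..k. clamp l1 \<theta> (f i)) = - (\<Sum>i=k+1..m. clamp l1 \<theta> (f i))"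
    using zero sum_atLeast1_split[OF assms(4), of "\<lambda>i. clamp l1 \<theta> (f i)"] by simp
  moreover have "(\<Sum>i=k+1..m. clamp l1 \<theta> (f i)) = (\<Sum>i=k+1..m. f i + l1)"
    using assms(3,5) by (intro sum.cong) (auto simp: clamp_eq_upper)
  moreover have "(\<Sum>i=k+1..m. f i) \<ge> - l1 * real (m - k) - l2 * real k * real (m - k)"
    using assms(1,4) False unfolding suffix_sums_bounded_def by simp
  ultimately show ?thesis
    using assms(4) by (simp add: sum.distrib of_nat_diff algebra_simps)
qed (use zero in simp)

lemma clamp_prefix_sum_bound:
  fixes f :: "nat \<Rightarrow> real"
  assumes anti: "antimono_on {1..m} f" and "0 \<le> l1" and "0 \<le> l2"
    and pre: "prefix_sums_bounded m l1 l2 f" and suf: "suffix_sums_bounded m l1 l2 f"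
    and zero: "(\<Sum>i=1..m. clamp l1 \<theta> (f i)) = 0" and "k \<le> m"
  shows "(\<Sum>i=1..k. clamp l1 \<theta> (f i)) \<le> l2 * real k * (real m - real k)"
proof -
  define g where "g i = clamp l1 \<theta> (f i)" for i
  have f_anti: "f j \<le> f i" if "1 \<le> i" "i \<le> j" "j \<le> m" for i j
    using monotone_onD[OF anti, of i j] that by simp
  obtain p where p: "p \<le> m" "\<And>i. 1 \<le> i \<Longrightarrow> i \<le> m \<Longrightarrow> \<theta> \<le> f i - l1 \<longleftrightarrow> i \<le> p"
    by (rule downclosed_initial_segment[of m "\<lambda>i. \<theta> \<le> f i - l1"]) (use f_anti in force)+
  obtain q where q: "q \<le> m" "\<And>i. 1 \<le> i \<Longrightarrow> i \<le> m \<Longrightarrow> \<theta> < f i + l1 \<longleftrightarrow> i \<le> q"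
    by (rule downclosed_initial_segment[of m "\<lambda>i. \<theta> < f i + l1"]) (use f_anti in force)+
  have lower: "(\<Sum>i=1..k. g i) \<le> l2 * real k * (real m - real k)" if "k \<le> p" for k
    using clamp_prefix_sum_bound_of_lower[OF pre] p that by (simp add: g_def)
  have upper: "(\<Sum>i=1..k. g i) \<le> l2 * real k * (real m - real k)" if "q \<le> k" "k \<le> m" for k
  proof -
    have "f i + l1 \<le> \<theta>" if "k < i" "i \<le> m" for i
      using q(2)[of i] that \<open>q \<le> k\<close> by linarith
    then show ?thesis
      using clamp_prefix_sum_bound_of_upper[OF suf zero \<open>0 \<le> l1\<close> \<open>k \<le> m\<close>] by (simp add: g_def)
  qed
  consider "k \<le> p" | "q \<le> k" | "p < k" "k < q" by linarith
  then show ?thesis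
  proof cases
    case 3
    have flat: "g i = \<theta>" if "p < i" "i \<le> q" for i
    proof -
      have "\<not> \<theta> \<le> f i - l1" "\<theta> < f i + l1"
        using p(2)[of i] q(2)[of i] that \<open>q \<le> m\<close> by auto
      then show ?thesis by (simp add: g_def clamp_eq_threshold)
    qed
    have constant_run: "(\<Sum>i=a+1..b. g i) = (real b - real a) * \<theta>"
      if "p \<le> a" "a \<le> b" "b \<le> q" for a b
    proof -
      have "(\<Sum>i=a+1..b. g i) = (\<Sum>i=a+1..b. \<theta>)"
        using flat that by (intro sum.cong refl) auto
      then show ?thesis using that(2) by (simp add: of_nat_diff)
    qed
    have "sum g {1..k} = sum g {1..p} + (real k - real p) * \<theta>"
      using sum_atLeast1_split[of p k g] constant_run[of p k] 3 by simp
    moreover have "sum g {1..q} = sum g {1..k} + (real q - real k) * \<theta>"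
      using sum_atLeast1_split[of k q g] constant_run[of k q] 3 by simp
    ultimately show ?thesis
      using 3 lower[of p] upper[of q] \<open>q \<le> m\<close> \<open>0 \<le> l2\<close>
        concave_bound_interpolate[of "real p" "real k" "real q" l2]
      by (simp add: g_def)
  qed (use lower upper \<open>k \<le> m\<close> in \<open>simp_all add: g_def\<close>)
qed

text \<open>Read \<open>G\<close> as a prefix sum of \<open>k\<close> terms of a decreasing zero-sum sequence and
  \<open>gmin\<close> as its last term, with \<open>a\<close> terms after the prefix.\<close>
lemma prefix_add_min_tail_le:
  fixes a k l G gmin :: real
  assumes "1 \<le> a" and "a * gmin \<le> - G" and "G \<le> l * k * a" and "0 \<le> l" and "0 \<le> k"
  shows "G + gmin \<le> l * (k + 1) * (a - 1)"
proof -
  have "a * (G + gmin) \<le> (a - 1) * G"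
    using assms(2) by (simp add: algebra_simps)
  also have "\<dots> \<le> (a - 1) * (l * k * a)"
    using assms(1,3) by (intro mult_left_mono) auto
  finally have "a * (G + gmin) \<le> a * (l * k * (a - 1))"
    by (simp add: algebra_simps)
  then have "G + gmin \<le> l * k * (a - 1)"
    using assms(1) by (simp add: mult_le_cancel_left_pos)
  also have "\<dots> \<le> l * (k + 1) * (a - 1)"
    using assms(1,4) by (intro mult_right_mono mult_left_mono) auto
  finally show ?thesis .
qed

lemma zero_sum_restrict_sums_bounded:
  fixes g :: "nat \<Rightarrow> real"
  assumes anti: "antimono_on {1..Suc n} g" and "0 \<le> l"
    and zero: "(\<Sum>i=1..Suc n. g i) = 0"
    and bound: "\<And>k. k \<le> Suc n \<Longrightarrow> (\<Sum>i=1..k. g i) \<le> l * real k * (real (Suc n) - real k)"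
  shows "prefix_sums_bounded n l l g" and "suffix_sums_bounded n l l g"
proof -
  show "prefix_sums_bounded n l l g"
    unfolding prefix_sums_bounded_def
  proof
    fix k assume "k \<in> {1..n}"
    then show "(\<Sum>j=1..k. g j) \<le> l * real k + l * real k * real (n - k)"
      using bound[of k] by (simp add: of_nat_diff algebra_simps)
  qed
  show "suffix_sums_bounded n l l g"
    unfolding suffix_sums_bounded_def
  proof (intro allI impI)
    fix k assume "k < n"
    define G where "G = (\<Sum>i=1..k. g i)"
    have tail: "(\<Sum>i=k+1..Suc n. g i) = - G"
      using zero sum_atLeast1_split[of k "Suc n" g] \<open>k < n\<close> by (simp add: G_def)
    have "real (card {k+1..Suc n}) * g (Suc n) \<le> (\<Sum>i=k+1..Suc n. g i)"
      using monotone_onD[OF anti, of _ "Suc n"] by (intro sum_bounded_below) simp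
    then have "real (Suc n - k) * g (Suc n) \<le> - G"
      using tail by simp
    moreover have "G \<le> l * real k * real (Suc n - k)"
      using bound[of k] \<open>k < n\<close> by (simp add: G_def of_nat_diff)
    ultimately have "G + g (Suc n) \<le> l * (real k + 1) * (real (Suc n - k) - 1)"
      using \<open>k < n\<close> \<open>0 \<le> l\<close> by (intro prefix_add_min_tail_le) auto
    moreover have "(\<Sum>j=k+1..n. g j) = - G - g (Suc n)"
      using tail \<open>k < n\<close> by simp
    ultimately show "(\<Sum>j=k+1..n. g j) \<ge> - l * real (n - k) - l * real k * real (n - k)"
      using \<open>k < n\<close> by (simp add: of_nat_diff algebra_simps)
  qed
qed

lemma flow_feasible_extend:
  assumes "flow_feasible n l2 l2 g" and zero: "(\<Sum>i=1..Suc n. g i) = 0"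
    and close: "\<forall>i\<in>{1..Suc n}. \<bar>g i - f i\<bar> \<le> l1"
  shows "flow_feasible (Suc n) l1 l2 f"
proof -
  obtain s0 s where s0: "\<forall>i\<in>{1..n}. s0 i \<in> {-l2..l2}"
    and s: "\<forall>i\<in>{1..n}. \<forall>j\<in>{1..n}. i \<noteq> j \<longrightarrow> s i j \<in> {-l2..l2} \<and> s i j = - s j i"
    and balance: "\<forall>i\<in>{1..n}. g i + s0 i + (\<Sum>j\<in>{1..n} - {i}. s i j) = 0"
    using assms(1) unfolding flow_feasible_def by blast
  define t0 where "t0 i = g i - f i" for i
  define t where "t i j = (if i \<le> n \<and> j \<le> n then s i j else if j = Suc n then s0 i else - s0 j)" for i j
  have "t0 i \<in> {-l1..l1}" if "i \<in> {1..Suc n}" for i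
  proof -
    have "\<bar>g i - f i\<bar> \<le> l1" using close that by blast
    then show ?thesis by (auto simp: t0_def abs_le_iff)
  qed
  moreover have "t i j \<in> {-l2..l2} \<and> t i j = - t j i"
    if ij: "i \<in> {1..Suc n}" "j \<in> {1..Suc n}" "i \<noteq> j" for i j
  proof (cases "i = Suc n")
    case True
    then have j: "j \<in> {1..n}" using ij by auto
    then have "t i j = - s0 j" "t j i = s0 j" using True by (simp_all add: t_def)
    moreover have "s0 j \<in> {-l2..l2}" using s0 j by blast
    ultimately show ?thesis by simp
  next
    case False
    then have i: "i \<in> {1..n}" using ij(1) by auto
    show ?thesis
    proof (cases "j = Suc n")
      case True
      then have "t i j = s0 i" "t j i = - s0 i" using i by (simp_all add: t_def)
      moreover have "s0 i \<in> {-l2..l2}" using s0 i by blast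
      ultimately show ?thesis by simp
    next
      case False
      then have j: "j \<in> {1..n}" using ij(2) by auto
      then have t_eq: "t i j = s i j" "t j i = s j i" using i by (simp_all add: t_def)
      have "s i j \<in> {-l2..l2} \<and> s i j = - s j i" using s i j ij(3) by blast
      then show ?thesis unfolding t_eq .
    qed
  qed
  moreover have "f i + t0 i + (\<Sum>j\<in>{1..Suc n} - {i}. t i j) = 0" if i: "i \<in> {1..Suc n}" for i
  proof (cases "i = Suc n")
    case False
    then have "i \<in> {1..n}" using i by auto
    moreover have "{1..Suc n} - {i} = insert (Suc n) ({1..n} - {i})" using False by auto
    ultimately have "(\<Sum>j\<in>{1..Suc n} - {i}. t i j) = s0 i + (\<Sum>j\<in>{1..n} - {i}. s i j)"
      by (simp add: t_def)
    moreover have "g i + s0 i + (\<Sum>j\<in>{1..n} - {i}. s i j) = 0"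
      using balance \<open>i \<in> {1..n}\<close> by blast
    ultimately show ?thesis by (simp add: t0_def)
  next
    case True
    have "(\<Sum>j\<in>{1..Suc n} - {i}. t i j) = (\<Sum>j=1..n. - s0 j)"
      using True by (intro sum.cong) (auto simp: t_def)
    also have "\<dots> = (\<Sum>j=1..n. g j + (\<Sum>l\<in>{1..n} - {j}. s j l))"
    proof (rule sum.cong[OF refl])
      fix j assume "j \<in> {1..n}"
      then have "g j + s0 j + (\<Sum>l\<in>{1..n} - {j}. s j l) = 0" using balance by blast
      then show "- s0 j = g j + (\<Sum>l\<in>{1..n} - {j}. s j l)" by linarith
    qed
    also have "\<dots> = (\<Sum>j=1..n. g j)"
    proof -
      have "(\<Sum>j=1..n. \<Sum>l\<in>{1..n} - {j}. s j l) = 0"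
        using s by (intro sum_offdiag_antisym_eq_0 finite_atLeastAtMost) blast
      then show ?thesis by (simp add: sum.distrib)
    qed
    also have "\<dots> = - g (Suc n)"
      using zero by simp
    finally show ?thesis using True by (simp add: t0_def)
  qed
  ultimately show ?thesis
    unfolding flow_feasible_def by blast
qed

lemma sums_bounded_imp_flow_feasible:
  fixes f :: "nat \<Rightarrow> real"
  assumes "antimono_on {1..m} f" and "0 \<le> l1" and "0 \<le> l2"
    and "prefix_sums_bounded m l1 l2 f" and "suffix_sums_bounded m l1 l2 f"
  shows "flow_feasible m l1 l2 f"
  using assms
proof (induction m arbitrary: l1 f)
  case 0
  then show ?case by (simp add: flow_feasible_def)
next
  case (Suc n)
  note anti = Suc.prems(1) and pre = Suc.prems(4) and suf = Suc.prems(5)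
  have "(\<Sum>i=1..Suc n. f i) \<le> l1 * real (Suc n) + l2 * real (Suc n) * real (Suc n - Suc n)"
    using pre[unfolded prefix_sums_bounded_def, rule_format, of "Suc n"] by simp
  moreover have "(\<Sum>i=0+1..Suc n. f i) \<ge> - l1 * real (Suc n - 0) - l2 * real 0 * real (Suc n - 0)"
    using suf unfolding suffix_sums_bounded_def by blast
  ultimately have "\<bar>\<Sum>i\<in>{1..Suc n}. f i\<bar> \<le> real (card {1..Suc n}) * l1"
    by (simp only: abs_le_iff) (simp add: algebra_simps)
  then obtain \<theta> where zero: "(\<Sum>i=1..Suc n. clamp l1 \<theta> (f i)) = 0"
    by (rule exists_clamp_threshold[rotated 3]) (simp_all add: \<open>0 \<le> l1\<close>)
  define g where "g i = clamp l1 \<theta> (f i)" for i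
  have g_anti: "antimono_on {1..Suc n} g"
    using anti unfolding g_def monotone_on_def by (auto intro: clamp_mono)
  have "(\<Sum>i=1..k. g i) \<le> l2 * real k * (real (Suc n) - real k)" if "k \<le> Suc n" for k
    using clamp_prefix_sum_bound[OF anti \<open>0 \<le> l1\<close> \<open>0 \<le> l2\<close> pre suf zero that] by (simp add: g_def)
  with g_anti have "prefix_sums_bounded n l2 l2 g" and "suffix_sums_bounded n l2 l2 g"
    using zero \<open>0 \<le> l2\<close> by (auto intro: zero_sum_restrict_sums_bounded simp: g_def)
  moreover have "antimono_on {1..n} g"
    using g_anti by (rule monotone_on_subset) auto
  ultimately have "flow_feasible n l2 l2 g"
    using Suc.IH \<open>0 \<le> l2\<close> by blast
  then show ?case
    by (rule flow_feasible_extend) (use zero clamp_dist[OF \<open>0 \<le> l1\<close>] in \<open>simp_all add: g_def\<close>)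
qed

lemma flow_feasible_iff_sums_bounded:
  assumes "antimono_on {1..m} f" and "0 \<le> l1" and "0 \<le> l2"
  shows "flow_feasible m l1 l2 f \<longleftrightarrow> prefix_sums_bounded m l1 l2 f \<and> suffix_sums_bounded m l1 l2 f"
  using assms flow_feasible_imp_sums_bounded sums_bounded_imp_flow_feasible by blast

theorem theorem1:
  fixes m :: nat and lam1 lam2 :: real and f :: "nat \<Rightarrow> real"
  assumes "m \<ge> 1" and "lam1 \<ge> 0" and "lam2 \<ge> 0"
    and "\<And>i j. 1 \<le> i \<Longrightarrow> i \<le> j \<Longrightarrow> j \<le> m \<Longrightarrow> f j \<le> f i"
  shows "(\<exists>t0 :: nat \<Rightarrow> real. \<exists>t :: nat \<Rightarrow> nat \<Rightarrow> real.
            (\<forall>i\<in>{1..m}. t0 i \<in> {-lam1..lam1}) \<and>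
            (\<forall>i\<in>{1..m}. \<forall>j\<in>{1..m}. i \<noteq> j \<longrightarrow> t i j \<in> {-lam2..lam2} \<and> t i j = - t j i) \<and>
            (\<forall>i\<in>{1..m}. f i + t0 i + (\<Sum>j\<in>{1..m} - {i}. t i j) = 0))
     \<longleftrightarrow>
         ((\<forall>k\<in>{1..m}. (\<Sum>j=1..k. f j) \<le> lam1 * real k + lam2 * real k * real (m - k)) \<and>
          (\<forall>k\<in>{0..m-1}. (\<Sum>j=k+1..m. f j) \<ge> - lam1 * real (m - k) - lam2 * real k * real (m - k)))"
proof -
  have "antimono_on {1..m} f"
    using assms(4) by (intro monotone_onI) auto
  then have "flow_feasible m lam1 lam2 f \<longleftrightarrow> prefix_sums_bounded m lam1 lam2 f \<and> suffix_sums_bounded m lam1 lam2 f"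
    using assms(2,3) by (rule flow_feasible_iff_sums_bounded)
  moreover have "{0..m-1} = {..<m}"
    using assms(1) by auto
  ultimately show ?thesis
    unfolding flow_feasible_def prefix_sums_bounded_def suffix_sums_bounded_def Ball_def lessThan_iff
    by simp
qed

end
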